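(* Let $(\psi^{(j)},p^{(j)},A^{(j)})$ on $[0,T_j]$, $j=1,2$, be two regular normal extremals, and suppose that at switching times $t_1$ of the first and $t_2$ of the second the reduced data coincide: $(\phi_1,\phi_2,\phi_3)^{(1)}(t_1)=(\phi_1,\phi_2,\phi_3)^{(2)}(t_2)=(0,a,b)$ with $a\neq0$. Then for every $\tau\ge0$ with $t_1+\tau\le T_1$ and $t_2+\tau\le T_2$, one has $(\phi_1,\phi_2,\phi_3)^{(1)}(t_1+\tau)=(\phi_1,\phi_2,\phi_3)^{(2)}(t_2+\tau)$, and $A^{(1)}(t_1+\tau)=A^{(2)}(t_2+\tau)$ for almost every such $\tau$.
   Context: Fix $\gamma\in(0,\pi/2)$, $s=\sin\gamma$, $c=\cos\gamma$, and $X=\begin{pmatrix}0&s^2&sc\\-s^2&0&0\\-sc&0&0\end{pmatrix}$, $Y=\begin{pmatrix}0&1&0\\-1&0&0\\0&0&0\end{pmatrix}$ on $\mathbb R^3$ with standard inner product. Let $\Sigma=\{\psi:\langle e_3,\psi\rangle=0\}$, $\psi_0=(0,s,c)^\top$. Admissible controls are piecewise constant $A:[0,T]\to\{X,Y\}$ with finitely many discontinuities (switching times), with trajectory $\dot\psi=A(t)\psi$, $\psi(0)=\psi_0$. A normal extremal is such a trajectory with a nonzero absolutely continuous costate $p$ satisfying $\dot p=-A(t)^\top p$ and, for a.e. $t$, $\langle p,A(t)\psi\rangle=\max_{B\in\{X,Y\}}\langle p,B\psi\rangle$. Let $F_1=X-Y$, $F_2=[X,Y]$, $F_3=[Y,[X,Y]]$,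 $\phi_i=\langle p,F_i\psi\rangle$; the switching function is $\Phi=\phi_1$. A normal extremal is regular (bang–bang) if $\Phi$ vanishes only at isolated times and at every switching time $\phi_1=0$ and $\phi_2\neq0$. *)

theory Defs
  imports "HOL-Analysis.Analysis"
begin

definition Xm :: "real \<Rightarrow> real^3^3" where
  "Xm \<gamma> = vector [vector [0, (sin \<gamma>)^2, sin \<gamma> * cos \<gamma>],
                     vector [-((sin \<gamma>)^2), 0, 0],
                     vector [-(sin \<gamma> * cos \<gamma>), 0, 0]]"

definition Ym :: "real^3^3" where
  "Ym = vector [vector [0, 1, 0], vector [-1, 0, 0], vector [0, 0, 0]]"

definition psi0 :: "real \<Rightarrow> real^3" where
  "psi0 \<gamma> = vector [0, sin \<gamma>, cos \<gamma>]"

definition lie :: "real^3^3 \<Rightarrow> real^3^3 \<Rightarrow> real^3^3" where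
  "lie M N = M ** N - N ** M"

definition F1 :: "real \<Rightarrow> real^3^3" where "F1 \<gamma> = Xm \<gamma> - Ym"
definition F2 :: "real \<Rightarrow> real^3^3" where "F2 \<gamma> = lie (Xm \<gamma>) Ym"
definition F3 :: "real \<Rightarrow> real^3^3" where "F3 \<gamma> = lie Ym (lie (Xm \<gamma>) Ym)"

definition phi :: "real^3^3 \<Rightarrow> (real \<Rightarrow> real^3) \<Rightarrow> (real \<Rightarrow> real^3) \<Rightarrow> real \<Rightarrow> real" where
  "phi F p \<psi> t = p t \<bullet> (F *v \<psi> t)"

definition phis :: "real \<Rightarrow> (real \<Rightarrow> real^3) \<Rightarrow> (real \<Rightarrow> real^3) \<Rightarrow> real \<Rightarrow> real \<times> real \<times> real" where
  "phis \<gamma> p \<psi> t = (phi (F1 \<gamma>) p \<psi> t, phi (F2 \<gamma>) p \<psi> t, phi (F3 \<gamma>) p \<psi> t)"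

text \<open>Admissible control: values in {X,Y} on [0,T], piecewise constant with finitely many
  discontinuities (since the range is discrete, continuity at a point = locally constant there).\<close>
definition admissible_control :: "real \<Rightarrow> real \<Rightarrow> (real \<Rightarrow> real^3^3) \<Rightarrow> bool" where
  "admissible_control \<gamma> T A \<longleftrightarrow>
     (\<forall>t\<in>{0..T}. A t \<in> {Xm \<gamma>, Ym}) \<and>
     (\<exists>S. finite S \<and> (\<forall>t\<in>{0..T} - S. continuous (at t within {0..T}) A))"

definition switching_time :: "real \<Rightarrow> (real \<Rightarrow> real^3^3) \<Rightarrow> real \<Rightarrow> bool" where
  "switching_time T A t \<longleftrightarrow> t \<in> {0..T} \<and> \<not> continuous (at t within {0..T}) A"

text \<open>Trajectory (Caratheodory solution, i.e. absolutely continuous, ODE a.e.) from psi0.\<close>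
definition trajectory :: "real \<Rightarrow> real \<Rightarrow> (real \<Rightarrow> real^3^3) \<Rightarrow> (real \<Rightarrow> real^3) \<Rightarrow> bool" where
  "trajectory \<gamma> T A \<psi> \<longleftrightarrow> \<psi> 0 = psi0 \<gamma> \<and>
     (\<forall>t\<in>{0..T}. ((\<lambda>s. A s *v \<psi> s) has_integral (\<psi> t - \<psi> 0)) {0..t})"

text \<open>Costate equation p' = - A^T p (absolutely continuous, a.e.), in integral form.\<close>
definition costate :: "real \<Rightarrow> (real \<Rightarrow> real^3^3) \<Rightarrow> (real \<Rightarrow> real^3) \<Rightarrow> bool" where
  "costate T A p \<longleftrightarrow>
     (\<forall>t\<in>{0..T}. ((\<lambda>s. - (transpose (A s) *v p s)) has_integral (p t - p 0)) {0..t})"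

definition normal_extremal ::
  "real \<Rightarrow> real \<Rightarrow> (real \<Rightarrow> real^3) \<Rightarrow> (real \<Rightarrow> real^3) \<Rightarrow> (real \<Rightarrow> real^3^3) \<Rightarrow> bool" where
  "normal_extremal \<gamma> T \<psi> p A \<longleftrightarrow>
     admissible_control \<gamma> T A \<and> trajectory \<gamma> T A \<psi> \<and> costate T A p \<and>
     (\<exists>t\<in>{0..T}. p t \<noteq> 0) \<and>
     (AE t in lborel. t \<in> {0..T} \<longrightarrow>
        p t \<bullet> (A t *v \<psi> t) = max (p t \<bullet> (Xm \<gamma> *v \<psi> t)) (p t \<bullet> (Ym *v \<psi> t)))"

definition regular_extremal ::
  "real \<Rightarrow> real \<Rightarrow> (real \<Rightarrow> real^3) \<Rightarrow> (real \<Rightarrow> real^3) \<Rightarrow> (real \<Rightarrow> real^3^3) \<Rightarrow> bool" where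
  "regular_extremal \<gamma> T \<psi> p A \<longleftrightarrow>
     normal_extremal \<gamma> T \<psi> p A \<and>
     (\<forall>t\<in>{0..T}. phi (F1 \<gamma>) p \<psi> t = 0 \<longrightarrow>
        (\<exists>e>0. \<forall>s\<in>{0..T}. s \<noteq> t \<and> \<bar>s - t\<bar> < e \<longrightarrow> phi (F1 \<gamma>) p \<psi> s \<noteq> 0)) \<and>
     (\<forall>t. switching_time T A t \<longrightarrow>
        phi (F1 \<gamma>) p \<psi> t = 0 \<and> phi (F2 \<gamma>) p \<psi> t \<noteq> 0)"

end

theory Submission
  imports Defs
begin

text \<open>Away from finitely many times (discontinuities of the control and zeros of
  phi_1) the maximum condition holds pointwise, so the control is X where phi_1 > 0 and Y where
  phi_1 < 0. Differentiating phi_i = <p, F_i psi> along the flow gives <p, [F_i, A] psi>, and the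
  bracket relations turn this into a switched linear system for (phi_1, phi_2, phi_3) whose mode is
  the sign of phi_1. Its solutions are determined by their initial values: at the last time up to
  which two solutions agree, phi_1 has a fixed sign on a short interval for each of them. Equal
  signs are handled by Gronwall's inequality for the squared distance; opposite signs are
  impossible, since then both phi_1 and phi_2 vanish there and the X-mode equation
  phi_2' = - sin^2 gamma phi_1 makes the positive phi_1 decrease. Equal switching functions finally
  give equal controls outside a finite set.\<close>

section \<open>Bracket relations\<close>

lemma lie_F1_Xm: "lie (F1 g) (Xm g) = F2 g"
  and lie_F1_Ym: "lie (F1 g) Ym = F2 g"
  and lie_F2_Ym: "lie (F2 g) Ym = - F3 g"
  and lie_F3_Ym: "lie (F3 g) Ym = F2 g"
  and lie_F3_Xm: "lie (F3 g) (Xm g) = (sin g)\<^sup>2 *\<^sub>R F2 g"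
  by (simp_all add: Xm_def Ym_def F1_def F2_def F3_def lie_def matrix_matrix_mult_def sum_3
      vec_eq_iff forall_3 algebra_simps power2_eq_square)

lemma lie_F2_Xm: "lie (F2 g) (Xm g) = - (sin g)\<^sup>2 *\<^sub>R F1 g"
proof -
  have "cos g * (cos g * (sin g * sin g)) + sin g * (sin g * (sin g * sin g)) = sin g * sin g"
    using sin_cos_squared_add[of g] by algebra
  then show ?thesis
    by (simp add: Xm_def Ym_def F1_def F2_def lie_def matrix_matrix_mult_def sum_3
        vec_eq_iff forall_3 algebra_simps power2_eq_square)
qed

section \<open>Real analysis on intervals\<close>

lemma indefinite_integral_imp_continuous_on:
  fixes x :: "real \<Rightarrow> 'a::banach"
  assumes "\<forall>t\<in>{0..T}. (G has_integral (x t - x 0)) {0..t}"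
  shows "continuous_on {0..T} x"
proof (cases "0 \<le> T")
  case True
  then have "(G has_integral (x T - x 0)) {0..T}"
    using assms by simp
  then have "G integrable_on {0..T}"
    by (rule has_integral_integrable)
  then have "continuous_on {0..T} (\<lambda>t. x 0 + integral {0..t} G)"
    by (intro continuous_intros indefinite_integral_continuous_1)
  moreover have "x 0 + integral {0..t} G = x t" if "t \<in> {0..T}" for t
    using assms that integral_unique[of G "x t - x 0" "{0..t}"] by simp
  ultimately show ?thesis
    using continuous_on_cong[of "{0..T}" "{0..T}" x "\<lambda>t. x 0 + integral {0..t} G"] by simp
qed simp

lemma indefinite_integral_imp_has_vector_derivative:
  fixes x :: "real \<Rightarrow> 'a::banach"
  assumes "\<forall>t\<in>{0..T}. (G has_integral (x t - x 0)) {0..t}"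
    and t: "t \<in> {0<..<T}" and "continuous (at t within {0..T}) G"
  shows "(x has_vector_derivative G t) (at t)"
proof -
  have "(G has_integral (x T - x 0)) {0..T}"
    using assms t by simp
  then have "G integrable_on {0..T}"
    by (rule has_integral_integrable)
  then have "((\<lambda>u. integral {0..u} G) has_vector_derivative G t) (at t within {0..T})"
    using integral_has_vector_derivative_continuous_at[of G 0 T t "{}"] assms(3) t by auto
  then have "((\<lambda>u. x 0 + integral {0..u} G) has_vector_derivative G t) (at t within {0..T})"
    by (auto intro!: derivative_eq_intros)
  then have "(x has_vector_derivative G t) (at t within {0..T})"
  proof (rule has_vector_derivative_transform_within[where d=1])
    fix u assume "u \<in> {0..T}"
    then show "x 0 + integral {0..u} G = x u"
      using assms(1) integral_unique[of G "x u - x 0" "{0..u}"] by simp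
  qed (use t in auto)
  then show ?thesis
    using t by (simp add: at_within_Icc_at)
qed

lemma continuous_two_valued_imp_locally_const:
  fixes A :: "'a::metric_space \<Rightarrow> 'b::metric_space"
  assumes "\<forall>s\<in>S. A s \<in> {X, Y}" "X \<noteq> Y" "t \<in> S" "continuous (at t within S) A"
  shows "\<exists>d>0. \<forall>s\<in>S. dist s t < d \<longrightarrow> A s = A t"
proof -
  have "0 < dist X Y"
    using assms(2) by simp
  then obtain d where "d > 0" "\<forall>s\<in>S. dist s t < d \<longrightarrow> dist (A s) (A t) < dist X Y"
    using assms(4) unfolding continuous_within_eps_delta by blast
  moreover have "A s = A t" if "s \<in> S" "dist (A s) (A t) < dist X Y" for s
  proof -
    have "A s \<in> {X, Y}" "A t \<in> {X, Y}"
      using assms(1,3) that(1) by auto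
    with that(2) show ?thesis
      by (auto simp: dist_commute)
  qed
  ultimately show ?thesis
    by blast
qed

lemma continuous_nonzero_imp_constant_sign:
  fixes f :: "real \<Rightarrow> real"
  assumes "continuous_on {a<..<b} f" "\<And>x. x \<in> {a<..<b} \<Longrightarrow> f x \<noteq> 0"
  shows "(\<forall>x\<in>{a<..<b}. 0 < f x) \<or> (\<forall>x\<in>{a<..<b}. f x < 0)"
proof (rule ccontr)
  assume "\<not> ?thesis"
  then obtain x y where xy: "x \<in> {a<..<b}" "y \<in> {a<..<b}" "f x \<le> 0" "0 \<le> f y"
    by (meson not_less)
  have sub: "{min x y..max x y} \<subseteq> {a<..<b}"
    using xy by auto
  obtain z where "z \<in> {min x y..max x y}" "f z = 0"
    using IVT'[of f x 0 y] IVT2'[of f x 0 y] xy continuous_on_subset[OF assms(1) sub]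
    by (cases "x \<le> y") auto
  with sub assms(2) show False
    by (meson subsetD)
qed

lemma gronwall_zero:
  fixes E :: "real \<Rightarrow> real"
  assumes "a \<le> b" "continuous_on {a..b} E" "E a = 0" "\<And>x. x \<in> {a..b} \<Longrightarrow> 0 \<le> E x"
    and "\<And>x. a < x \<Longrightarrow> x < b \<Longrightarrow> \<exists>E'. (E has_real_derivative E') (at x) \<and> E' \<le> E x"
  shows "E b = 0"
proof -
  have "E b * exp (- b) \<le> E a * exp (- a)"
  proof (rule DERIV_nonpos_imp_decreasing_open[OF assms(1)])
    fix x assume x: "a < x" "x < b"
    then obtain E' where "(E has_real_derivative E') (at x)" "E' \<le> E x"
      using assms(5) by blast
    then show "\<exists>y. ((\<lambda>x. E x * exp (- x)) has_real_derivative y) (at x) \<and> y \<le> 0"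
      by (intro exI[of _ "(E' - E x) * exp (- x)"]) (auto intro!: derivative_eq_intros simp: algebra_simps)
  qed (intro continuous_intros assms(2))
  then show ?thesis
    using assms(1,3,4) by (simp add: mult_le_0_iff order_antisym)
qed

lemma nonneg_derivative_at_root_of_pos:
  fixes f g :: "real \<Rightarrow> real"
  assumes "a < b" "continuous_on {a..b} f" "continuous_on {a..b} g" "f a = 0"
    and "\<And>x. a < x \<Longrightarrow> x < b \<Longrightarrow> (f has_real_derivative g x) (at x)"
    and "\<And>x. a < x \<Longrightarrow> x < b \<Longrightarrow> 0 < f x"
  shows "0 \<le> g a"
proof (rule ccontr)
  assume "\<not> 0 \<le> g a"
  then have "0 < - g a"
    by simp
  moreover have "continuous (at a within {a..b}) g"
    using assms(1,3) by (simp add: continuous_on_eq_continuous_within)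
  ultimately obtain d where d: "d > 0" "\<forall>x\<in>{a..b}. dist x a < d \<longrightarrow> dist (g x) (g a) < - g a"
    unfolding continuous_within_eps_delta by blast
  define m where "m = min d (b - a)"
  have m: "0 < m" "m \<le> d" "m \<le> b - a"
    using d(1) assms(1) by (auto simp: m_def)
  define c where "c = a + m / 2"
  have c: "a < c" "c < b" "c - a < d"
    using m unfolding c_def by linarith+
  have "f c < f a"
  proof (rule DERIV_neg_imp_decreasing_open[OF c(1)])
    fix x assume x: "a < x" "x < c"
    then have "dist (g x) (g a) < - g a"
      using d(2) c by (simp add: dist_real_def)
    then have "g x < 0"
      by (simp add: dist_real_def)
    with x c assms(5) show "\<exists>y. (f has_real_derivative y) (at x) \<and> y < 0"
      by (meson less_trans)
  next
    show "continuous_on {a..c} f"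
      using continuous_on_subset[OF assms(2)] c by simp
  qed
  with assms(4) assms(6)[of c] c show False
    by linarith
qed

lemma closed_Icc_continuation:
  fixes S :: "real set"
  assumes "closed S" "a \<in> S"
    and extend: "\<And>x. x \<in> S \<Longrightarrow> a \<le> x \<Longrightarrow> x < b \<Longrightarrow> \<exists>e>0. {x..x + e} \<subseteq> S"
  shows "{a..b} \<subseteq> S"
proof (rule ccontr)
  define B where "B = {a..b} - S"
  assume "\<not> {a..b} \<subseteq> S"
  then obtain y where y: "y \<in> B"
    unfolding B_def by blast
  have B_bdd: "bdd_below B"
    unfolding B_def by (rule bdd_belowI[of _ a]) simp
  define t0 where "t0 = Inf B"
  have t0_le: "t0 \<le> x" if "x \<in> B" for x
    unfolding t0_def using B_bdd that by (rule cInf_lower[rotated])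
  have a_le_t0: "a \<le> t0"
    unfolding t0_def using y by (intro cInf_greatest) (auto simp: B_def)
  have below: "{a..<t0} \<subseteq> S"
  proof
    fix x assume x: "x \<in> {a..<t0}"
    have "x \<le> y" "y \<le> b"
      using t0_le[OF y] x y by (auto simp: B_def)
    with x t0_le show "x \<in> S"
      by (fastforce simp: B_def)
  qed
  have t0_S: "t0 \<in> S"
  proof (cases "t0 = a")
    case False
    then have "{a..t0} = closure {a..<t0}"
      using a_le_t0 by simp
    also have "\<dots> \<subseteq> S"
      using below assms(1) by (rule closure_minimal)
    finally show ?thesis
      using a_le_t0 by auto
  qed (use assms(2) in simp)
  have "t0 < b"
    using t0_le[OF y] y t0_S by (auto simp: B_def order_le_less)
  then obtain e where "e > 0" "{t0..t0 + e} \<subseteq> S"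
    using extend t0_S a_le_t0 by blast
  moreover obtain x where "x \<in> B" "x < t0 + e"
    using cInf_less_iff[of B "t0 + e"] y B_bdd \<open>e > 0\<close> unfolding t0_def by auto
  ultimately have "x \<in> S"
    using t0_le by auto
  with \<open>x \<in> B\<close> show False
    by (simp add: B_def)
qed

lemma finite_isolated_zeros:
  fixes f :: "real \<Rightarrow> real"
  assumes "continuous_on {a..b} f"
    and isolated: "\<forall>t\<in>{a..b}. f t = 0 \<longrightarrow> (\<exists>e>0. \<forall>s\<in>{a..b}. s \<noteq> t \<and> \<bar>s - t\<bar> < e \<longrightarrow> f s \<noteq> 0)"
  shows "finite {t \<in> {a..b}. f t = 0}"
proof -
  let ?Z = "{t \<in> {a..b}. f t = 0}"
  have "bounded ?Z"
    by (rule bounded_subset[OF bounded_closed_interval[of a b]]) auto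
  moreover have "closed ?Z"
    by (rule continuous_closed_preimage_constant[OF assms(1) closed_atLeastAtMost])
  ultimately have "compact ?Z"
    by (simp add: compact_eq_bounded_closed)
  moreover have "discrete ?Z"
  proof (rule discreteI)
    fix t assume "t \<in> ?Z"
    with isolated obtain e where "e > 0" "\<forall>s\<in>{a..b}. s \<noteq> t \<and> \<bar>s - t\<bar> < e \<longrightarrow> f s \<noteq> 0"
      by blast
    with \<open>t \<in> ?Z\<close> show "t isolated_in ?Z"
      unfolding isolated_in_dist_Ex_iff
      by (intro conjI exI[of _ e]) (auto simp: dist_real_def abs_minus_commute)
  qed
  ultimately show ?thesis
    using discrete_compact_finite_iff by blast
qed

section \<open>The reduced switched system\<close>

text \<open>The dynamics of (phi_1, phi_2, phi_3) with k = sin^2 gamma: the first branch is the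
  control X (phi_1 > 0), the second the control Y (phi_1 < 0).\<close>

definition switched_ode_at ::
  "real \<Rightarrow> (real \<Rightarrow> real) \<Rightarrow> (real \<Rightarrow> real) \<Rightarrow> (real \<Rightarrow> real) \<Rightarrow> real \<Rightarrow> bool" where
  "switched_ode_at k f g h x \<longleftrightarrow> f x \<noteq> 0 \<and> (f has_real_derivative g x) (at x) \<and>
     (if 0 < f x
      then (g has_real_derivative - k * f x) (at x) \<and> (h has_real_derivative k * g x) (at x)
      else (g has_real_derivative - h x) (at x) \<and> (h has_real_derivative g x) (at x))"

definition switched_solution ::
  "real \<Rightarrow> real \<Rightarrow> (real \<Rightarrow> real) \<Rightarrow> (real \<Rightarrow> real) \<Rightarrow> (real \<Rightarrow> real) \<Rightarrow> bool" where
  "switched_solution k L f g h \<longleftrightarrow>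
     continuous_on {0..L} f \<and> continuous_on {0..L} g \<and> continuous_on {0..L} h \<and>
     (\<exists>E. finite E \<and> (\<forall>x\<in>{0<..<L} - E. switched_ode_at k f g h x))"

lemma switched_ode_at_shift:
  assumes "switched_ode_at k f g h (t0 + x)"
  shows "switched_ode_at k (\<lambda>x. f (t0 + x)) (\<lambda>x. g (t0 + x)) (\<lambda>x. h (t0 + x)) x"
proof -
  have shift: "((\<lambda>x. F (t0 + x)) has_real_derivative y) (at x)"
    if "(F has_real_derivative y) (at (t0 + x))" for F :: "real \<Rightarrow> real" and y
    using that DERIV_shift[of F y x t0] by (simp add: add.commute)
  from assms show ?thesis
    unfolding switched_ode_at_def by (auto intro!: shift split: if_splits)
qed

lemma sum_sq_diff_has_real_derivative:
  fixes f1 f2 g1 g2 h1 h2 :: "real \<Rightarrow> real"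
  assumes "(f1 has_real_derivative a1) (at x)" "(f2 has_real_derivative a2) (at x)"
    "(g1 has_real_derivative b1) (at x)" "(g2 has_real_derivative b2) (at x)"
    "(h1 has_real_derivative c1) (at x)" "(h2 has_real_derivative c2) (at x)"
  shows "((\<lambda>x. (f1 x - f2 x)\<^sup>2 + (g1 x - g2 x)\<^sup>2 + (h1 x - h2 x)\<^sup>2) has_real_derivative
     2 * (f1 x - f2 x) * (a1 - a2) + 2 * (g1 x - g2 x) * (b1 - b2) + 2 * (h1 x - h2 x) * (c1 - c2)) (at x)"
  by (auto intro!: derivative_eq_intros assms) (simp add: algebra_simps)

lemma switched_ode_at_sq_dist_derivative:
  fixes f1 g1 h1 f2 g2 h2 :: "real \<Rightarrow> real"
  defines "D \<equiv> \<lambda>x. (f1 x - f2 x)\<^sup>2 + (g1 x - g2 x)\<^sup>2 + (h1 x - h2 x)\<^sup>2"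
  assumes k: "0 \<le> k" "k \<le> 1"
    and ode: "switched_ode_at k f1 g1 h1 x" "switched_ode_at k f2 g2 h2 x"
    and same_sign: "0 < f1 x \<longleftrightarrow> 0 < f2 x"
  shows "\<exists>D'. (D has_real_derivative D') (at x) \<and> D' \<le> D x"
proof -
  define df dg dh where "df = f1 x - f2 x" and "dg = g1 x - g2 x" and "dh = h1 x - h2 x"
  have D_x: "D x = df\<^sup>2 + dg\<^sup>2 + dh\<^sup>2"
    by (simp add: D_def df_def dg_def dh_def)
  have fg: "2 * df * dg \<le> df\<^sup>2 + dg\<^sup>2" and gh: "2 * dg * dh \<le> dg\<^sup>2 + dh\<^sup>2"
    by (simp_all add: sum_squares_bound)
  show ?thesis
  proof (cases "0 < f1 x")
    case True
    then have "(D has_real_derivative 2 * df * dg + 2 * dg * (- k * f1 x - - k * f2 x)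
        + 2 * dh * (k * g1 x - k * g2 x)) (at x)"
      using ode same_sign unfolding D_def df_def dg_def dh_def switched_ode_at_def
      by (intro sum_sq_diff_has_real_derivative) simp_all
    moreover have "2 * df * dg + 2 * dg * (- k * f1 x - - k * f2 x) + 2 * dh * (k * g1 x - k * g2 x)
        = (1 - k) * (2 * df * dg) + k * (2 * dg * dh)"
      by (simp add: df_def dg_def dh_def algebra_simps)
    moreover have "\<dots> \<le> (1 - k) * (df\<^sup>2 + dg\<^sup>2) + k * (dg\<^sup>2 + dh\<^sup>2)"
      using k fg gh by (intro add_mono mult_left_mono) simp_all
    moreover have "\<dots> = D x - (k * df\<^sup>2 + (1 - k) * dh\<^sup>2)"
      by (simp add: D_x algebra_simps)
    moreover have "0 \<le> k * df\<^sup>2" "0 \<le> (1 - k) * dh\<^sup>2"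
      using k by simp_all
    ultimately show ?thesis
      by (intro exI[of _ "2 * df * dg + 2 * dg * (- k * f1 x - - k * f2 x) + 2 * dh * (k * g1 x - k * g2 x)"])
        linarith
  next
    case False
    then have "(D has_real_derivative 2 * df * dg + 2 * dg * (- h1 x - - h2 x)
        + 2 * dh * (g1 x - g2 x)) (at x)"
      using ode same_sign unfolding D_def df_def dg_def dh_def switched_ode_at_def
      by (intro sum_sq_diff_has_real_derivative) simp_all
    moreover have "2 * df * dg + 2 * dg * (- h1 x - - h2 x) + 2 * dh * (g1 x - g2 x) = 2 * df * dg"
      by (simp add: dg_def dh_def algebra_simps)
    moreover have "df\<^sup>2 + dg\<^sup>2 \<le> D x"
      by (simp add: D_x)
    ultimately show ?thesis
      using fg by auto
  qed
qed

text \<open>Two solutions of the switched system cannot leave a common state in opposite modes: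
  f1 a = f2 a = 0 forces g1 a = g2 a = 0, and then g1' = - k f1 < 0 drives f1 below 0.\<close>

lemma opposite_signs_from_common_state:
  fixes f1 g1 f2 g2 :: "real \<Rightarrow> real"
  assumes "a < b" "0 < k"
    and cont: "continuous_on {a..b} f1" "continuous_on {a..b} g1"
      "continuous_on {a..b} f2" "continuous_on {a..b} g2"
    and init: "f1 a = f2 a" "g1 a = g2 a"
    and f1': "\<And>x. a < x \<Longrightarrow> x < b \<Longrightarrow> (f1 has_real_derivative g1 x) (at x)"
    and f2': "\<And>x. a < x \<Longrightarrow> x < b \<Longrightarrow> (f2 has_real_derivative g2 x) (at x)"
    and g1': "\<And>x. a < x \<Longrightarrow> x < b \<Longrightarrow> (g1 has_real_derivative - k * f1 x) (at x)"
    and pos: "\<And>x. a < x \<Longrightarrow> x < b \<Longrightarrow> 0 < f1 x"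
    and neg: "\<And>x. a < x \<Longrightarrow> x < b \<Longrightarrow> f2 x < 0"
  shows False
proof -
  have closure: "closure {a<..<b} = {a..b}"
    using assms(1) by simp
  have "0 \<le> f1 a"
    using continuous_ge_on_closure[of "{a<..<b}" f1 a 0] cont(1) pos assms(1) closure
    by (simp add: less_imp_le)
  moreover have "0 \<le> - f2 a"
    using continuous_ge_on_closure[of "{a<..<b}" "\<lambda>x. - f2 x" a 0] cont(3) neg assms(1) closure
    by (auto intro!: continuous_intros simp: less_imp_le)
  ultimately have f_a: "f1 a = 0" "f2 a = 0"
    using init(1) by linarith+
  have "0 \<le> g1 a"
    by (rule nonneg_derivative_at_root_of_pos[OF assms(1) cont(1,2) f_a(1) f1' pos])
  moreover have "0 \<le> - g2 a"
    using assms(1) cont(3,4) f_a(2) f2' neg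
    by (intro nonneg_derivative_at_root_of_pos[where f="\<lambda>x. - f2 x"])
      (auto intro!: continuous_intros derivative_eq_intros)
  ultimately have g1_a: "g1 a = 0"
    using init(2) by linarith
  define m where "m = (a + b) / 2"
  have m: "a < m" "m < b"
    using assms(1) by (simp_all add: m_def)
  have g1_neg: "g1 x < 0" if "a < x" "x < m" for x
  proof -
    have "g1 x < g1 a"
    proof (rule DERIV_neg_imp_decreasing_open[OF that(1)])
      fix y assume "a < y" "y < x"
      then show "\<exists>d. (g1 has_real_derivative d) (at y) \<and> d < 0"
        using g1' pos assms(2) that m by (intro exI[of _ "- k * f1 y"]) auto
    qed (use continuous_on_subset[OF cont(2)] that m in simp)
    with g1_a show ?thesis
      by simp
  qed
  have "f1 m < f1 a"
  proof (rule DERIV_neg_imp_decreasing_open[OF m(1)])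
    fix x assume "a < x" "x < m"
    then show "\<exists>y. (f1 has_real_derivative y) (at x) \<and> y < 0"
      using f1' g1_neg m by (intro exI[of _ "g1 x"]) auto
  qed (use continuous_on_subset[OF cont(1)] m in simp)
  with f_a(1) pos[OF m] show False
    by simp
qed

lemma switched_ode_same_sign:
  fixes f1 g1 h1 f2 g2 h2 :: "real \<Rightarrow> real"
  assumes "a < b" "0 < k"
    and cont: "continuous_on {a..b} f1" "continuous_on {a..b} g1"
      "continuous_on {a..b} f2" "continuous_on {a..b} g2"
    and init: "f1 a = f2 a" "g1 a = g2 a"
    and ode: "\<And>x. a < x \<Longrightarrow> x < b \<Longrightarrow> switched_ode_at k f1 g1 h1 x \<and> switched_ode_at k f2 g2 h2 x"
  shows "(\<forall>x\<in>{a<..<b}. 0 < f1 x \<and> 0 < f2 x) \<or> (\<forall>x\<in>{a<..<b}. f1 x < 0 \<and> f2 x < 0)"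
proof -
  have sign: "(\<forall>x\<in>{a<..<b}. 0 < f x) \<or> (\<forall>x\<in>{a<..<b}. f x < 0)"
    if "continuous_on {a..b} f" "\<And>x. a < x \<Longrightarrow> x < b \<Longrightarrow> f x \<noteq> 0" for f :: "real \<Rightarrow> real"
  proof (rule continuous_nonzero_imp_constant_sign)
    show "continuous_on {a<..<b} f"
      using that(1) by (rule continuous_on_subset) auto
  qed (use that(2) in auto)
  have no_opposite: False
    if pos: "\<forall>x\<in>{a<..<b}. 0 < F1 x" and neg: "\<forall>x\<in>{a<..<b}. F2 x < 0"
      and "continuous_on {a..b} F1" "continuous_on {a..b} G1"
      and "continuous_on {a..b} F2" "continuous_on {a..b} G2"
      and "F1 a = F2 a" "G1 a = G2 a"
      and "\<And>x. a < x \<Longrightarrow> x < b \<Longrightarrow> switched_ode_at k F1 G1 H1 x \<and> switched_ode_at k F2 G2 H2 x"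
    for F1 G1 H1 F2 G2 H2
    using that assms(1,2)
    by (intro opposite_signs_from_common_state[of a b k F1 G1 F2 G2]) (auto simp: switched_ode_at_def)
  have "(\<forall>x\<in>{a<..<b}. 0 < f1 x) \<or> (\<forall>x\<in>{a<..<b}. f1 x < 0)"
    using ode by (intro sign[OF cont(1)]) (simp add: switched_ode_at_def)
  moreover have "(\<forall>x\<in>{a<..<b}. 0 < f2 x) \<or> (\<forall>x\<in>{a<..<b}. f2 x < 0)"
    using ode by (intro sign[OF cont(3)]) (simp add: switched_ode_at_def)
  moreover have "\<not> ((\<forall>x\<in>{a<..<b}. 0 < f1 x) \<and> (\<forall>x\<in>{a<..<b}. f2 x < 0))"
    using no_opposite[of f1 f2 g1 g2 h1 h2] cont init ode by blast
  moreover have "\<not> ((\<forall>x\<in>{a<..<b}. 0 < f2 x) \<and> (\<forall>x\<in>{a<..<b}. f1 x < 0))"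
    using no_opposite[of f2 f1 g2 g1 h2 h1] cont init ode by fastforce
  ultimately show ?thesis
    by blast
qed

lemma switched_ode_solutions_agree:
  fixes f1 g1 h1 f2 g2 h2 :: "real \<Rightarrow> real"
  assumes "a < b" "0 < k" "k \<le> 1"
    and cont: "continuous_on {a..b} f1" "continuous_on {a..b} g1" "continuous_on {a..b} h1"
      "continuous_on {a..b} f2" "continuous_on {a..b} g2" "continuous_on {a..b} h2"
    and init: "f1 a = f2 a" "g1 a = g2 a" "h1 a = h2 a"
    and ode: "\<And>x. a < x \<Longrightarrow> x < b \<Longrightarrow> switched_ode_at k f1 g1 h1 x \<and> switched_ode_at k f2 g2 h2 x"
  shows "f1 b = f2 b \<and> g1 b = g2 b \<and> h1 b = h2 b"
proof -
  have same_sign: "(\<forall>x\<in>{a<..<b}. 0 < f1 x \<and> 0 < f2 x) \<or> (\<forall>x\<in>{a<..<b}. f1 x < 0 \<and> f2 x < 0)"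
    using assms(1,2) cont(1,2,4,5) init(1,2) ode by (rule switched_ode_same_sign)
  define D where "D x = (f1 x - f2 x)\<^sup>2 + (g1 x - g2 x)\<^sup>2 + (h1 x - h2 x)\<^sup>2" for x
  have "D b = 0"
  proof (rule gronwall_zero[where a = a and E = D])
    show "continuous_on {a..b} D"
      unfolding D_def[abs_def] by (intro continuous_intros cont)
    show "D a = 0"
      using init by (simp add: D_def)
    fix x assume "a < x" "x < b"
    moreover have "x \<in> {a<..<b}"
      using \<open>a < x\<close> \<open>x < b\<close> by simp
    then have "0 < f1 x \<longleftrightarrow> 0 < f2 x"
      using same_sign by (meson less_asym)
    ultimately show "\<exists>D'. (D has_real_derivative D') (at x) \<and> D' \<le> D x"
      using ode assms(2,3) unfolding D_def[abs_def]
      by (intro switched_ode_at_sq_dist_derivative) auto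
  qed (use assms(1) in \<open>auto simp: D_def\<close>)
  then show ?thesis
    by (simp add: D_def add_nonneg_eq_0_iff)
qed

lemma switched_solutions_agree_right:
  fixes f1 g1 h1 f2 g2 h2 :: "real \<Rightarrow> real"
  assumes "0 < k" "k \<le> 1" "switched_solution k L f1 g1 h1" "switched_solution k L f2 g2 h2"
    and t: "0 \<le> t" "t < L" and "f1 t = f2 t" "g1 t = g2 t" "h1 t = h2 t"
  obtains e where "0 < e" "t + e \<le> L"
    and "\<And>y. t < y \<Longrightarrow> y \<le> t + e \<Longrightarrow> f1 y = f2 y \<and> g1 y = g2 y \<and> h1 y = h2 y"
proof -
  obtain E1 where E1: "finite E1" "\<forall>x\<in>{0<..<L} - E1. switched_ode_at k f1 g1 h1 x"
    using assms(3) unfolding switched_solution_def by blast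
  obtain E2 where E2: "finite E2" "\<forall>x\<in>{0<..<L} - E2. switched_ode_at k f2 g2 h2 x"
    using assms(4) unfolding switched_solution_def by blast
  obtain d where d: "d > 0" "\<forall>x\<in>E1 \<union> E2. x \<noteq> t \<longrightarrow> d \<le> dist t x"
    using finite_set_avoid[of "E1 \<union> E2" t] E1(1) E2(1) by blast
  define m where "m = min d (L - t)"
  have "0 < m" "m \<le> d" "m \<le> L - t"
    using d(1) t(2) by (auto simp: m_def)
  define e where "e = m / 2"
  have e: "0 < e" "e < d" "t + e < L"
    using \<open>0 < m\<close> \<open>m \<le> d\<close> \<open>m \<le> L - t\<close> unfolding e_def by linarith+
  show ?thesis
  proof (rule that[OF e(1) less_imp_le[OF e(3)]])
    fix y assume y: "t < y" "y \<le> t + e"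
    show "f1 y = f2 y \<and> g1 y = g2 y \<and> h1 y = h2 y"
    proof (rule switched_ode_solutions_agree[OF y(1) assms(1,2)])
      fix x assume x: "t < x" "x < y"
      then have "x \<notin> E1 \<union> E2"
        using d(2) e y by (auto simp: dist_real_def)
      with x y e t E1(2) E2(2) show "switched_ode_at k f1 g1 h1 x \<and> switched_ode_at k f2 g2 h2 x"
        by auto
    qed (use assms(3,4,7-9) t y e in \<open>auto simp: switched_solution_def intro: continuous_on_subset\<close>)
  qed
qed

lemma switched_solution_unique:
  fixes f1 g1 h1 f2 g2 h2 :: "real \<Rightarrow> real"
  assumes "0 < k" "k \<le> 1" "switched_solution k L f1 g1 h1" "switched_solution k L f2 g2 h2"
    and "f1 0 = f2 0" "g1 0 = g2 0" "h1 0 = h2 0"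
  shows "\<forall>x\<in>{0..L}. f1 x = f2 x \<and> g1 x = g2 x \<and> h1 x = h2 x"
proof -
  define S where "S = {x \<in> {0..L}. (f1 x - f2 x, g1 x - g2 x, h1 x - h2 x) = 0}"
  have "{0..L} \<subseteq> S" if "0 \<le> L"
  proof (rule closed_Icc_continuation)
    show "closed S"
      using assms(3,4) unfolding S_def switched_solution_def
      by (intro continuous_closed_preimage_constant continuous_intros) auto
    show "0 \<in> S"
      using assms(5-7) that by (simp add: S_def zero_prod_def)
  next
    fix t assume t: "t \<in> S" "0 \<le> t" "t < L"
    then obtain e where e: "0 < e" "t + e \<le> L"
      and agree: "\<And>y. t < y \<Longrightarrow> y \<le> t + e \<Longrightarrow> f1 y = f2 y \<and> g1 y = g2 y \<and> h1 y = h2 y"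
      using switched_solutions_agree_right[OF assms(1-4) t(2,3)] by (auto simp: S_def zero_prod_def)
    have "{t..t + e} \<subseteq> S"
    proof
      fix y assume y: "y \<in> {t..t + e}"
      show "y \<in> S"
      proof (cases "y = t")
        case False
        with y t e agree[of y] show ?thesis
          by (simp add: S_def zero_prod_def)
      qed (use t in simp)
    qed
    with e(1) show "\<exists>e>0. {t..t + e} \<subseteq> S"
      by blast
  qed
  then show ?thesis
    by (cases "0 \<le> L") (auto simp: S_def zero_prod_def)
qed

section \<open>Extremals\<close>

lemma phi_has_real_derivative:
  assumes "(\<psi> has_vector_derivative M *v \<psi> t) (at t)"
    and "(p has_vector_derivative - (transpose M *v p t)) (at t)"
  shows "(phi F p \<psi> has_real_derivative phi (lie F M) p \<psi> t) (at t)"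
proof -
  have "((\<lambda>t. F *v \<psi> t) has_vector_derivative F *v (M *v \<psi> t)) (at t)"
    using assms(1) by (rule bounded_linear.has_vector_derivative[OF matrix_vector_mul_bounded_linear])
  then have "(phi F p \<psi> has_vector_derivative
      p t \<bullet> (F *v (M *v \<psi> t)) + - (transpose M *v p t) \<bullet> (F *v \<psi> t)) (at t)"
    unfolding phi_def[abs_def]
    using bounded_bilinear.has_vector_derivative[OF bounded_bilinear_inner assms(2)] by blast
  moreover have "p t \<bullet> (F *v (M *v \<psi> t)) + - (transpose M *v p t) \<bullet> (F *v \<psi> t)
      = phi (lie F M) p \<psi> t"
    by (simp add: phi_def lie_def matrix_vector_mul_assoc dot_lmul_matrix matrix_vector_mult_diff_rdistrib
        inner_diff_right)
  ultimately show ?thesis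
    by (simp add: has_real_derivative_iff_has_vector_derivative)
qed

lemma phi_uminus: "phi (- F) p \<psi> t = - phi F p \<psi> t"
  unfolding phi_def using matrix_vector_mult_diff_rdistrib[of 0 F "\<psi> t"] by simp

lemma phi_scaleR: "phi (c *\<^sub>R F) p \<psi> t = c * phi F p \<psi> t"
  by (simp add: phi_def scaleR_matrix_vector_assoc[symmetric])

lemma Xm_neq_Ym:
  assumes "0 < g" "g < pi / 2"
  shows "Xm g \<noteq> Ym"
proof
  assume "Xm g = Ym"
  then have "sin g * cos g = 0"
    by (metis Xm_def Ym_def vector_3(1,3))
  moreover have "0 < sin g" "0 < cos g"
    using assms by (auto intro!: sin_gt_zero cos_gt_zero)
  ultimately show False
    by simp
qed

lemma normal_extremal_continuous_on:
  assumes "normal_extremal g T \<psi> p A"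
  shows "continuous_on {0..T} \<psi>" "continuous_on {0..T} p"
  using assms unfolding normal_extremal_def trajectory_def costate_def
  by (auto intro: indefinite_integral_imp_continuous_on)

lemma normal_extremal_phi_continuous_on:
  assumes "normal_extremal g T \<psi> p A"
  shows "continuous_on {0..T} (phi F p \<psi>)"
  using normal_extremal_continuous_on[OF assms] unfolding phi_def[abs_def]
  by (intro continuous_on_inner bounded_linear.continuous_on[OF matrix_vector_mul_bounded_linear])

lemma normal_extremal_locally_const:
  assumes "normal_extremal g T \<psi> p A" "0 < g" "g < pi / 2"
    and "t \<in> {0..T}" "continuous (at t within {0..T}) A"
  obtains d where "0 < d" "\<forall>s\<in>{0..T}. dist s t < d \<longrightarrow> A s = A t"
proof -
  have "\<forall>s\<in>{0..T}. A s \<in> {Xm g, Ym}"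
    using assms(1) unfolding normal_extremal_def admissible_control_def by blast
  with Xm_neq_Ym[OF assms(2,3)] assms(4,5) show ?thesis
    using continuous_two_valued_imp_locally_const that by blast
qed

lemma normal_extremal_has_vector_derivative:
  assumes NE: "normal_extremal g T \<psi> p A" and "0 < g" "g < pi / 2"
    and t: "t \<in> {0<..<T}" and A_cont: "continuous (at t within {0..T}) A"
  shows "(\<psi> has_vector_derivative A t *v \<psi> t) (at t)"
    and "(p has_vector_derivative - (transpose (A t) *v p t)) (at t)"
proof -
  have t_in: "t \<in> {0..T}"
    using t by simp
  obtain d where d: "0 < d" "\<forall>s\<in>{0..T}. dist s t < d \<longrightarrow> A s = A t"
    using normal_extremal_locally_const[OF NE assms(2,3) t_in A_cont] .
  have "continuous (at t within {0..T}) \<psi>" "continuous (at t within {0..T}) p"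
    using normal_extremal_continuous_on[OF NE] t_in by (simp_all add: continuous_on_eq_continuous_within)
  then have \<psi>_cont: "continuous (at t within {0..T}) (\<lambda>s. A t *v \<psi> s)"
    and p_cont: "continuous (at t within {0..T}) (\<lambda>s. - (transpose (A t) *v p s))"
    by (intro continuous_minus bounded_linear.continuous[OF matrix_vector_mul_bounded_linear]; simp)+
  have "continuous (at t within {0..T}) (\<lambda>s. A s *v \<psi> s)"
    by (rule continuous_transform_within[OF \<psi>_cont d(1) t_in]) (use d(2) in \<open>simp add: dist_commute\<close>)
  moreover have "\<forall>s\<in>{0..T}. ((\<lambda>s. A s *v \<psi> s) has_integral (\<psi> s - \<psi> 0)) {0..s}"
    using NE unfolding normal_extremal_def trajectory_def by blast
  ultimately show "(\<psi> has_vector_derivative A t *v \<psi> t) (at t)"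
    using t by (intro indefinite_integral_imp_has_vector_derivative)
  have "continuous (at t within {0..T}) (\<lambda>s. - (transpose (A s) *v p s))"
    by (rule continuous_transform_within[OF p_cont d(1) t_in]) (use d(2) in \<open>simp add: dist_commute\<close>)
  moreover have "\<forall>s\<in>{0..T}. ((\<lambda>s. - (transpose (A s) *v p s)) has_integral (p s - p 0)) {0..s}"
    using NE unfolding normal_extremal_def costate_def by blast
  ultimately show "(p has_vector_derivative - (transpose (A t) *v p t)) (at t)"
    using t by (intro indefinite_integral_imp_has_vector_derivative)
qed

lemma normal_extremal_phi_has_real_derivative:
  assumes "normal_extremal g T \<psi> p A" "0 < g" "g < pi / 2"
    and "t \<in> {0<..<T}" "continuous (at t within {0..T}) A"
  shows "(phi F p \<psi> has_real_derivative phi (lie F (A t)) p \<psi> t) (at t)"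
  using normal_extremal_has_vector_derivative[OF assms] by (rule phi_has_real_derivative)

text \<open>The maximum condition only holds almost everywhere; near a continuity point A is
  constant, so it holds a.e. for the continuous functions phi (A t), phi X, phi Y, hence at t.\<close>

lemma normal_extremal_maximum_at_continuity_point:
  assumes NE: "normal_extremal g T \<psi> p A" and "0 < g" "g < pi / 2"
    and t: "t \<in> {0<..<T}" and A_cont: "continuous (at t within {0..T}) A"
  shows "phi (A t) p \<psi> t = max (phi (Xm g) p \<psi> t) (phi Ym p \<psi> t)"
proof -
  have t_in: "t \<in> {0..T}"
    using t by simp
  obtain d where d: "0 < d" "\<forall>s\<in>{0..T}. dist s t < d \<longrightarrow> A s = A t"
    using normal_extremal_locally_const[OF NE assms(2,3) t_in A_cont] .
  define U where "U = ball t d \<inter> {0<..<T}"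
  define C where "C = {s \<in> {0..T}. phi (A t) p \<psi> s - max (phi (Xm g) p \<psi> s) (phi Ym p \<psi> s) = 0}"
  have "closed C"
    unfolding C_def
    by (intro continuous_closed_preimage_constant continuous_on_diff continuous_on_max
        normal_extremal_phi_continuous_on[OF NE] closed_atLeastAtMost)
  moreover have "AE s in lebesgue. s \<in> U \<longrightarrow> s \<in> C"
  proof (rule AE_completion)
    have "AE s in lborel. s \<in> {0..T} \<longrightarrow> phi (A s) p \<psi> s = max (phi (Xm g) p \<psi> s) (phi Ym p \<psi> s)"
      using NE by (simp add: normal_extremal_def phi_def)
    then show "AE s in lborel. s \<in> U \<longrightarrow> s \<in> C"
    proof (rule eventually_mono, intro impI)
      fix s assume max: "s \<in> {0..T} \<longrightarrow> phi (A s) p \<psi> s = max (phi (Xm g) p \<psi> s) (phi Ym p \<psi> s)"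
        and "s \<in> U"
      then have s: "s \<in> {0..T}" "dist s t < d"
        by (simp_all add: U_def dist_commute)
      then have "A s = A t"
        using d(2) by blast
      with max s(1) show "s \<in> C"
        by (simp add: C_def)
    qed
  qed
  moreover have "open U" "t \<in> U"
    using d(1) t by (simp_all add: U_def open_Int)
  ultimately have "t \<in> C"
    using mem_closed_if_AE_lebesgue_open by blast
  then show ?thesis
    by (simp add: C_def)
qed

lemma normal_extremal_control_by_sign:
  assumes NE: "normal_extremal g T \<psi> p A" and "0 < g" "g < pi / 2"
    and t: "t \<in> {0<..<T}" and "continuous (at t within {0..T}) A"
    and "phi (F1 g) p \<psi> t \<noteq> 0"
  shows "A t = (if 0 < phi (F1 g) p \<psi> t then Xm g else Ym)"
proof -
  have "A t \<in> {Xm g, Ym}"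
    using NE t unfolding normal_extremal_def admissible_control_def by auto
  moreover have "phi (F1 g) p \<psi> t = phi (Xm g) p \<psi> t - phi Ym p \<psi> t"
    by (simp add: phi_def F1_def matrix_vector_mult_diff_rdistrib inner_diff_right)
  moreover note normal_extremal_maximum_at_continuity_point[OF assms(1-5)]
  ultimately show ?thesis
    using assms(6) by (auto simp: max_def split: if_splits)
qed

lemma regular_extremal_bang_bang:
  assumes RE: "regular_extremal g T \<psi> p A" and g: "0 < g" "g < pi / 2"
  obtains S where "finite S"
    and "\<And>t. t \<in> {0<..<T} - S \<Longrightarrow> continuous (at t within {0..T}) A \<and>
      phi (F1 g) p \<psi> t \<noteq> 0 \<and> A t = (if 0 < phi (F1 g) p \<psi> t then Xm g else Ym)"
proof -
  have NE: "normal_extremal g T \<psi> p A"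
    using RE unfolding regular_extremal_def by blast
  obtain D where D: "finite D" "\<forall>t\<in>{0..T} - D. continuous (at t within {0..T}) A"
    using NE unfolding normal_extremal_def admissible_control_def by blast
  define Z where "Z = {t \<in> {0..T}. phi (F1 g) p \<psi> t = 0}"
  have "finite Z"
    unfolding Z_def
    using normal_extremal_phi_continuous_on[OF NE] RE unfolding regular_extremal_def
    by (intro finite_isolated_zeros) simp_all
  show ?thesis
  proof (rule that[of "D \<union> Z"])
    show "finite (D \<union> Z)"
      using D(1) \<open>finite Z\<close> by simp
    fix t assume t: "t \<in> {0<..<T} - (D \<union> Z)"
    then have "continuous (at t within {0..T}) A" "phi (F1 g) p \<psi> t \<noteq> 0"
      using D(2) by (auto simp: Z_def)
    with t show "continuous (at t within {0..T}) A \<and> phi (F1 g) p \<psi> t \<noteq> 0 \<and>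
        A t = (if 0 < phi (F1 g) p \<psi> t then Xm g else Ym)"
      using normal_extremal_control_by_sign[OF NE g] by simp
  qed
qed

lemma normal_extremal_switched_ode_at:
  assumes NE: "normal_extremal g T \<psi> p A" and g: "0 < g" "g < pi / 2"
    and t: "t \<in> {0<..<T}" and A_cont: "continuous (at t within {0..T}) A"
    and nonzero: "phi (F1 g) p \<psi> t \<noteq> 0"
  shows "switched_ode_at ((sin g)\<^sup>2) (phi (F1 g) p \<psi>) (phi (F2 g) p \<psi>) (phi (F3 g) p \<psi>) t"
proof -
  note derivs = normal_extremal_phi_has_real_derivative[OF NE g t A_cont, of "F1 g"]
    normal_extremal_phi_has_real_derivative[OF NE g t A_cont, of "F2 g"]
    normal_extremal_phi_has_real_derivative[OF NE g t A_cont, of "F3 g"]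
  note control = normal_extremal_control_by_sign[OF NE g t A_cont nonzero]
  show ?thesis
  proof (cases "0 < phi (F1 g) p \<psi> t")
    case True
    with control nonzero derivs show ?thesis
      unfolding switched_ode_at_def by (simp add: lie_F1_Xm lie_F2_Xm lie_F3_Xm phi_uminus phi_scaleR)
  next
    case False
    with control nonzero derivs show ?thesis
      unfolding switched_ode_at_def by (simp add: lie_F1_Ym lie_F2_Ym lie_F3_Ym phi_uminus)
  qed
qed

lemma regular_extremal_switched_solution:
  assumes RE: "regular_extremal g T \<psi> p A" and g: "0 < g" "g < pi / 2"
    and t0: "0 \<le> t0" "t0 + L \<le> T"
  shows "switched_solution ((sin g)\<^sup>2) L (\<lambda>x. phi (F1 g) p \<psi> (t0 + x))
    (\<lambda>x. phi (F2 g) p \<psi> (t0 + x)) (\<lambda>x. phi (F3 g) p \<psi> (t0 + x))"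
proof -
  have NE: "normal_extremal g T \<psi> p A"
    using RE unfolding regular_extremal_def by blast
  obtain S where S: "finite S"
    and bang_bang: "\<And>t. t \<in> {0<..<T} - S \<Longrightarrow> continuous (at t within {0..T}) A \<and>
      phi (F1 g) p \<psi> t \<noteq> 0 \<and> A t = (if 0 < phi (F1 g) p \<psi> t then Xm g else Ym)"
    using regular_extremal_bang_bang[OF RE g] by blast
  have "continuous_on {0..L} (\<lambda>x. phi F p \<psi> (t0 + x))" for F
    using t0 by (intro continuous_on_compose2[OF normal_extremal_phi_continuous_on[OF NE]]
        continuous_intros) auto
  moreover have "switched_ode_at ((sin g)\<^sup>2) (\<lambda>x. phi (F1 g) p \<psi> (t0 + x))
      (\<lambda>x. phi (F2 g) p \<psi> (t0 + x)) (\<lambda>x. phi (F3 g) p \<psi> (t0 + x)) x"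
    if "x \<in> {0<..<L} - (+) (- t0) ` S" for x
  proof (rule switched_ode_at_shift)
    have "t0 + x \<in> {0<..<T} - S"
      using that t0 by force
    then show "switched_ode_at ((sin g)\<^sup>2) (phi (F1 g) p \<psi>) (phi (F2 g) p \<psi>) (phi (F3 g) p \<psi>) (t0 + x)"
      using bang_bang by (intro normal_extremal_switched_ode_at[OF NE g]) auto
  qed
  moreover have "finite ((+) (- t0) ` S)"
    using S by simp
  ultimately show ?thesis
    unfolding switched_solution_def by blast
qed

lemma regular_extremals_controls_agree_AE:
  assumes RE1: "regular_extremal g T1 \<psi>1 p1 A1" and RE2: "regular_extremal g T2 \<psi>2 p2 A2"
    and g: "0 < g" "g < pi / 2"
    and t1: "0 \<le> t1" "t1 + L \<le> T1" and t2: "0 \<le> t2" "t2 + L \<le> T2"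
    and switching_eq: "\<forall>\<tau>\<in>{0..L}. phi (F1 g) p1 \<psi>1 (t1 + \<tau>) = phi (F1 g) p2 \<psi>2 (t2 + \<tau>)"
  shows "AE \<tau> in lborel. \<tau> \<in> {0..L} \<longrightarrow> A1 (t1 + \<tau>) = A2 (t2 + \<tau>)"
proof -
  obtain S1 where S1: "finite S1"
    and bang_bang1: "\<And>t. t \<in> {0<..<T1} - S1 \<Longrightarrow> continuous (at t within {0..T1}) A1 \<and>
      phi (F1 g) p1 \<psi>1 t \<noteq> 0 \<and> A1 t = (if 0 < phi (F1 g) p1 \<psi>1 t then Xm g else Ym)"
    using regular_extremal_bang_bang[OF RE1 g] by blast
  obtain S2 where S2: "finite S2"
    and bang_bang2: "\<And>t. t \<in> {0<..<T2} - S2 \<Longrightarrow> continuous (at t within {0..T2}) A2 \<and>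
      phi (F1 g) p2 \<psi>2 t \<noteq> 0 \<and> A2 t = (if 0 < phi (F1 g) p2 \<psi>2 t then Xm g else Ym)"
    using regular_extremal_bang_bang[OF RE2 g] by blast
  let ?N = "{0, L} \<union> (+) t1 -` S1 \<union> (+) t2 -` S2"
  have "finite ?N"
    using S1 S2 by (simp add: finite_vimageI inj_on_def)
  then have "AE \<tau> in lborel. \<tau> \<notin> ?N"
    by (intro AE_not_in finite_imp_null_set_lborel)
  then show ?thesis
  proof (rule eventually_mono, intro impI)
    fix \<tau> assume "\<tau> \<notin> ?N" "\<tau> \<in> {0..L}"
    then have "t1 + \<tau> \<in> {0<..<T1} - S1" "t2 + \<tau> \<in> {0<..<T2} - S2"
      using t1 t2 by auto
    then show "A1 (t1 + \<tau>) = A2 (t2 + \<tau>)"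
      using switching_eq \<open>\<tau> \<in> {0..L}\<close> bang_bang1 bang_bang2 by simp
  qed
qed

theorem mainTheorem9:
  fixes \<gamma> T1 T2 t1 t2 a b :: real
    and \<psi>1 p1 \<psi>2 p2 :: "real \<Rightarrow> real^3"
    and A1 A2 :: "real \<Rightarrow> real^3^3"
  assumes "0 < \<gamma>" and "\<gamma> < pi / 2"
    and "regular_extremal \<gamma> T1 \<psi>1 p1 A1"
    and "regular_extremal \<gamma> T2 \<psi>2 p2 A2"
    and "switching_time T1 A1 t1"
    and "switching_time T2 A2 t2"
    and "phis \<gamma> p1 \<psi>1 t1 = (0, a, b)"
    and "phis \<gamma> p2 \<psi>2 t2 = (0, a, b)"
    and "a \<noteq> 0"
  shows "(\<forall>\<tau>\<ge>0. t1 + \<tau> \<le> T1 \<and> t2 + \<tau> \<le> T2 \<longrightarrow>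
            phis \<gamma> p1 \<psi>1 (t1 + \<tau>) = phis \<gamma> p2 \<psi>2 (t2 + \<tau>))
       \<and> (AE \<tau> in lborel. 0 \<le> \<tau> \<and> t1 + \<tau> \<le> T1 \<and> t2 + \<tau> \<le> T2 \<longrightarrow>
            A1 (t1 + \<tau>) = A2 (t2 + \<tau>))"
proof -
  define L where "L = min (T1 - t1) (T2 - t2)"
  have t1: "0 \<le> t1" "t1 + L \<le> T1" and t2: "0 \<le> t2" "t2 + L \<le> T2"
    using assms(5,6) unfolding switching_time_def L_def by auto
  have k: "0 < (sin \<gamma>)\<^sup>2" "(sin \<gamma>)\<^sup>2 \<le> 1"
    using assms(1,2) sin_gt_zero[of \<gamma>] by (auto simp: abs_square_le_1)
  have agree: "\<forall>\<tau>\<in>{0..L}. phis \<gamma> p1 \<psi>1 (t1 + \<tau>) = phis \<gamma> p2 \<psi>2 (t2 + \<tau>)"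
    using switched_solution_unique[OF k regular_extremal_switched_solution[OF assms(3,1,2) t1]
        regular_extremal_switched_solution[OF assms(4,1,2) t2]] assms(7,8)
    by (simp add: phis_def)
  have controls: "AE \<tau> in lborel. \<tau> \<in> {0..L} \<longrightarrow> A1 (t1 + \<tau>) = A2 (t2 + \<tau>)"
    using agree by (intro regular_extremals_controls_agree_AE[OF assms(3,4,1,2) t1 t2]) (simp add: phis_def)
  have window: "\<tau> \<in> {0..L}" if "0 \<le> \<tau>" "t1 + \<tau> \<le> T1" "t2 + \<tau> \<le> T2" for \<tau>
    using that by (simp add: L_def)
  show ?thesis
  proof
    show "\<forall>\<tau>\<ge>0. t1 + \<tau> \<le> T1 \<and> t2 + \<tau> \<le> T2 \<longrightarrow>
        phis \<gamma> p1 \<psi>1 (t1 + \<tau>) = phis \<gamma> p2 \<psi>2 (t2 + \<tau>)"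
      using agree window by blast
    show "AE \<tau> in lborel. 0 \<le> \<tau> \<and> t1 + \<tau> \<le> T1 \<and> t2 + \<tau> \<le> T2 \<longrightarrow>
        A1 (t1 + \<tau>) = A2 (t2 + \<tau>)"
      using controls by (rule eventually_mono) (use window in blast)
  qed
qed

end
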